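(* Let $\mathbf{C}$ be a covering of a finite nonempty set $U$ such that every $x\in U$ has a core block in $\mathbf{C}$. If $K\in\mathbf{C}$ is not a core block of any element of $U$, then $K$ is a reducible element of $\mathbf{C}$.
   Context: A covering of $U$ is a family (set) $\mathbf{C}$ of subsets of $U$ with $\emptyset\notin\mathbf{C}$ and $\bigcup\mathbf{C}=U$; its elements are called blocks. The membership repeat degree of $x\in U$ is $\partial(x)=|\{K\in\mathbf{C}: x\in K\}|$. The common block repeat degree of $(x,y)\in U\times U$ is $\lambda(x,y)=|\{K\in\mathbf{C}: \{x,y\}\subseteq K\}|$. A block $K\in\mathbf{C}$ is a core block of $x\in U$ if $x\in K$ and $\lambda(x,y)=\partial(x)$ for every $y\in K$. A block $K\in\mathbf{C}$ is a reducible element of $\mathbf{C}$ if $K$ is the union of some subfamily of $\mathbf{C}\setminus\{K\}$; otherwise it is irreducible. *)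

theory Defs
  imports Main
begin

definition covering :: "'a set \<Rightarrow> 'a set set \<Rightarrow> bool" where
  "covering U C \<longleftrightarrow> (\<forall>K\<in>C. K \<subseteq> U) \<and> {} \<notin> C \<and> \<Union>C = U"

definition mrd :: "'a set set \<Rightarrow> 'a \<Rightarrow> nat" where
  "mrd C x = card {K \<in> C. x \<in> K}"

definition cbrd :: "'a set set \<Rightarrow> 'a \<Rightarrow> 'a \<Rightarrow> nat" where
  "cbrd C x y = card {K \<in> C. {x, y} \<subseteq> K}"

definition core_block :: "'a set set \<Rightarrow> 'a set \<Rightarrow> 'a \<Rightarrow> bool" where
  "core_block C K x \<longleftrightarrow> K \<in> C \<and> x \<in> K \<and> (\<forall>y\<in>K. cbrd C x y = mrd C x)"

definition reducible :: "'a set set \<Rightarrow> 'a set \<Rightarrow> bool" where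
  "reducible C K \<longleftrightarrow> K \<in> C \<and> (\<exists>S \<subseteq> C - {K}. \<Union>S = K)"

end

theory Submission
  imports Defs
begin

(* In a finite family C, a core block B of x is contained in every
   block K containing x: the blocks containing both x and y form a subfamily of
   the blocks containing x, and equality of their cardinalities forces the two
   families to coincide, so every block through x also contains y.
   Hence, if every element of a block K has some core block, then K is exactly
   the union of the chosen core blocks of its elements (each lies inside K and
   contains its element).  When K is the core block of none of its elements,
   all these core blocks differ from K, so K is the union of a subfamily of
   C - {K}, i.e. K is reducible.  The theorem follows once we note that a
   covering of a finite set is a finite family. *)

lemma covering_finite:
  assumes "finite U" and "covering U C"
  shows "finite C"
proof -
  have "C \<subseteq> Pow U" using assms(2) unfolding covering_def by auto
  then show ?thesis using assms(1) finite_subset by blast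
qed

lemma core_block_subset:
  assumes "finite C" and "core_block C B x" and "K \<in> C" and "x \<in> K"
  shows "B \<subseteq> K"
proof
  fix y assume "y \<in> B"
  then have same_card: "card {K \<in> C. {x, y} \<subseteq> K} = card {K \<in> C. x \<in> K}"
    using assms(2) unfolding core_block_def cbrd_def mrd_def by auto
  have "finite {K \<in> C. x \<in> K}" using assms(1) by simp
  moreover have "{K \<in> C. {x, y} \<subseteq> K} \<subseteq> {K \<in> C. x \<in> K}" by blast
  ultimately have "{K \<in> C. {x, y} \<subseteq> K} = {K \<in> C. x \<in> K}"
    using card_subset_eq same_card by blast
  then show "y \<in> K" using assms(3,4) by blast
qed

lemma union_of_core_blocks:
  assumes "finite C" and "K \<in> C" and "\<And>x. x \<in> K \<Longrightarrow> core_block C (f x) x"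
  shows "\<Union>(f ` K) = K"
proof
  show "\<Union>(f ` K) \<subseteq> K"
  proof (rule UN_least)
    fix x assume "x \<in> K"
    then show "f x \<subseteq> K" using core_block_subset[OF assms(1) assms(3) assms(2)] by simp
  qed
  show "K \<subseteq> \<Union>(f ` K)"
    using assms(3) unfolding core_block_def by blast
qed

lemma reducible_if_not_core_block:
  assumes "finite C" and "K \<in> C"
    and has_core: "\<And>x. x \<in> K \<Longrightarrow> \<exists>B. core_block C B x"
    and not_core: "\<And>x. x \<in> K \<Longrightarrow> \<not> core_block C K x"
  shows "reducible C K"
proof -
  define f where "f x = (SOME B. core_block C B x)" for x
  have core_f: "core_block C (f x) x" if "x \<in> K" for x
    using someI_ex[OF has_core[OF that]] unfolding f_def .
  have "f ` K \<subseteq> C - {K}"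
  proof
    fix B assume "B \<in> f ` K"
    then obtain x where "x \<in> K" and "B = f x" by blast
    then have "core_block C B x" and "\<not> core_block C K x"
      using core_f not_core by simp_all
    then have "B \<in> C" and "B \<noteq> K" unfolding core_block_def by blast+
    then show "B \<in> C - {K}" by blast
  qed
  moreover have "\<Union>(f ` K) = K"
    using union_of_core_blocks[OF assms(1,2)] core_f by blast
  ultimately show ?thesis unfolding reducible_def using assms(2) by blast
qed

theorem proposition18:
  fixes U :: "'a set" and C :: "'a set set" and K :: "'a set"
  assumes "finite U" and "U \<noteq> {}"
    and "covering U C"
    and "\<forall>x\<in>U. \<exists>B. core_block C B x"
    and "K \<in> C"
    and "\<forall>x\<in>U. \<not> core_block C K x"
  shows "reducible C K"
proof -
  have "K \<subseteq> U" using assms(3,5) unfolding covering_def by blast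
  then show ?thesis
    using reducible_if_not_core_block[OF covering_finite[OF assms(1,3)] assms(5)]
      assms(4,6) by blast
qed

end
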